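(* Let $N:=\lceil 4(1-\gamma)^{-1}\rceil$, let $\Delta_0:=(1-\gamma)^{-1}\max_{s\in\mathcal S}g^{\pi_0}(s)$, and let $\bar D_0>0$ satisfy $\max_{s}D^{\pi^*}_{\pi_0}(s)\le\bar D_0$. Let PMD be run from $\pi_0$ with step sizes $\eta_t=4^{\lfloor t/N\rfloor}\bar D_0/\Delta_0$. Then for all $t\ge0$, $$V^{\pi_t}(s)-V^{\pi^*}(s)\le 2^{-\lfloor t/N\rfloor}\Delta_0\quad\forall s\in\mathcal S.$$
   Context: An infinite-horizon discounted MDP: finite state space $\mathcal S$, finite action space $\mathcal A$, transition probabilities $\mathcal P(s'\mid s,a)$, cost $c$, discount $\gamma\in[0,1)$. A policy $\pi$ assigns $\pi(\cdot\mid s)\in\Delta_{|\mathcal A|}$ (probability simplex). Let $\omega$ be a differentiable convex distance-generating function on $\Delta_{|\mathcal A|}$ and $D^{\pi'}_{\pi}(s):=\omega(\pi'(\cdot\mid s))-\omega(\pi(\cdot\mid s))-\langle\nabla\omega(\pi(\cdot\mid s)),\pi'(\cdot\mid s)-\pi(\cdot\mid s)\rangle$. For each $s$, $p\mapsto h^p(s)$ is closed convex on $\Delta_{|\mathcal A|}$ and $\mu_h$-strongly convex ($\mu_h\ge0$) w.r.t. this Bregman distance: $h^{p}(s)-h^{p'}(s)-\langle (h')^{p'}(s,\cdot),p-p'\rangle\ge\mu_h[\omega(p)-\omega(p')-\langle\nabla\omega(p'),p-p'\rangle]$. $V^\pi(s)=\mathbb E[\sum_{t\ge0}\gamma^t(c(s_t,a_t)+h^{\pi(\cdot\mid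 s_t)}(s_t))\mid s_0=s,\ a_t\sim\pi(\cdot\mid s_t),\ s_{t+1}\sim\mathcal P(\cdot\mid s_t,a_t)]$, $Q^\pi(s,a)$ the same with $a_0=a$. $\pi^*$ is an optimal policy ($V^{\pi^*}\le V^\pi$ pointwise for all $\pi$). Advantage: $\psi^\pi(s,p):=\langle Q^\pi(s,\cdot),p\rangle-V^\pi(s)+h^p(s)-h^{\pi(\cdot\mid s)}(s)$; advantage gap $g^\pi(s):=\max_{p\in\Delta_{|\mathcal A|}}\{-\psi^\pi(s,p)\}$. PMD: $\pi_{t+1}(\cdot\mid s)=\operatorname{argmin}_{p\in\Delta_{|\mathcal A|}}\{\eta_t[\langle Q^{\pi_t}(s,\cdot),p\rangle+h^p(s)]+\omega(p)-\omega(\pi_t(\cdot\mid s))-\langle\nabla\omega(\pi_t(\cdot\mid s)),p-\pi_t(\cdot\mid s)\rangle\}$ for all $s$. *)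

theory Defs
  imports "HOL-Analysis.Analysis"
begin

text \<open>P s a s' = transition probability, c s a = cost, h s p = regularizer h^p(s),
  gam = discount factor.\<close>

definition prob_simplex :: "(real^'a::finite) set" where
  "prob_simplex = {p. (\<forall>a. 0 \<le> p $ a) \<and> (\<Sum>a\<in>UNIV. p $ a) = 1}"

definition is_policy :: "('s \<Rightarrow> real^'a::finite) \<Rightarrow> bool" where
  "is_policy \<pi> \<longleftrightarrow> (\<forall>s. \<pi> s \<in> prob_simplex)"

text \<open>Bregman distance generated by omega with gradient map gw:
  bregman omega gw q p = omega q - omega p - <grad omega p, q - p>,
  so that D^{pi'}_{pi}(s) = bregman omega gw (pi' s) (pi s).\<close>
definition bregman :: "(real^'a::finite \<Rightarrow> real) \<Rightarrow> (real^'a \<Rightarrow> real^'a) \<Rightarrow> real^'a \<Rightarrow> real^'a \<Rightarrow> real" where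
  "bregman \<omega> g\<omega> q p = \<omega> q - \<omega> p - g\<omega> p \<bullet> (q - p)"

primrec state_dist :: "('s::finite \<Rightarrow> 'a::finite \<Rightarrow> 's \<Rightarrow> real) \<Rightarrow> ('s \<Rightarrow> real^'a)
    \<Rightarrow> ('s \<Rightarrow> real) \<Rightarrow> nat \<Rightarrow> 's \<Rightarrow> real" where
  "state_dist P \<pi> \<mu> 0 = \<mu>"
| "state_dist P \<pi> \<mu> (Suc t) =
     (\<lambda>s'. \<Sum>s\<in>UNIV. \<Sum>a\<in>UNIV. state_dist P \<pi> \<mu> t s * \<pi> s $ a * P s a s')"

definition step_cost :: "('s \<Rightarrow> 'a::finite \<Rightarrow> real) \<Rightarrow> ('s \<Rightarrow> real^'a \<Rightarrow> real)
    \<Rightarrow> ('s \<Rightarrow> real^'a) \<Rightarrow> 's \<Rightarrow> real" where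
  "step_cost c h \<pi> s = (\<Sum>a\<in>UNIV. \<pi> s $ a * c s a) + h s (\<pi> s)"

definition Vf :: "('s::finite \<Rightarrow> 'a::finite \<Rightarrow> 's \<Rightarrow> real) \<Rightarrow> ('s \<Rightarrow> 'a \<Rightarrow> real)
    \<Rightarrow> ('s \<Rightarrow> real^'a \<Rightarrow> real) \<Rightarrow> real \<Rightarrow> ('s \<Rightarrow> real^'a) \<Rightarrow> 's \<Rightarrow> real" where
  "Vf P c h \<gamma> \<pi> s =
     (\<Sum>t. \<gamma> ^ t * (\<Sum>s'\<in>UNIV. state_dist P \<pi> (\<lambda>x. if x = s then 1 else 0) t s' * step_cost c h \<pi> s'))"

text \<open>Q^pi(s,a): same expectation with a_0 = a.  At time 0 the cost is
  c(s,a) + h^{pi(.|s)}(s); the state s_1 is distributed as P(.|s,a), and from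
  time 1 on actions follow pi.\<close>
definition Qf :: "('s::finite \<Rightarrow> 'a::finite \<Rightarrow> 's \<Rightarrow> real) \<Rightarrow> ('s \<Rightarrow> 'a \<Rightarrow> real)
    \<Rightarrow> ('s \<Rightarrow> real^'a \<Rightarrow> real) \<Rightarrow> real \<Rightarrow> ('s \<Rightarrow> real^'a) \<Rightarrow> 's \<Rightarrow> 'a \<Rightarrow> real" where
  "Qf P c h \<gamma> \<pi> s a = c s a + h s (\<pi> s) +
     (\<Sum>t. \<gamma> ^ (Suc t) * (\<Sum>s'\<in>UNIV. state_dist P \<pi> (P s a) t s' * step_cost c h \<pi> s'))"

definition adv :: "('s::finite \<Rightarrow> 'a::finite \<Rightarrow> 's \<Rightarrow> real) \<Rightarrow> ('s \<Rightarrow> 'a \<Rightarrow> real)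
    \<Rightarrow> ('s \<Rightarrow> real^'a \<Rightarrow> real) \<Rightarrow> real \<Rightarrow> ('s \<Rightarrow> real^'a) \<Rightarrow> 's \<Rightarrow> real^'a \<Rightarrow> real" where
  "adv P c h \<gamma> \<pi> s p = (\<Sum>a\<in>UNIV. Qf P c h \<gamma> \<pi> s a * p $ a) - Vf P c h \<gamma> \<pi> s + h s p - h s (\<pi> s)"

definition adv_gap :: "('s::finite \<Rightarrow> 'a::finite \<Rightarrow> 's \<Rightarrow> real) \<Rightarrow> ('s \<Rightarrow> 'a \<Rightarrow> real)
    \<Rightarrow> ('s \<Rightarrow> real^'a \<Rightarrow> real) \<Rightarrow> real \<Rightarrow> ('s \<Rightarrow> real^'a) \<Rightarrow> 's \<Rightarrow> real" where
  "adv_gap P c h \<gamma> \<pi> s = (SUP p\<in>prob_simplex. - adv P c h \<gamma> \<pi> s p)"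

definition pmd_obj :: "('s::finite \<Rightarrow> 'a::finite \<Rightarrow> 's \<Rightarrow> real) \<Rightarrow> ('s \<Rightarrow> 'a \<Rightarrow> real)
    \<Rightarrow> ('s \<Rightarrow> real^'a \<Rightarrow> real) \<Rightarrow> real \<Rightarrow> (real^'a \<Rightarrow> real) \<Rightarrow> (real^'a \<Rightarrow> real^'a)
    \<Rightarrow> real \<Rightarrow> ('s \<Rightarrow> real^'a) \<Rightarrow> 's \<Rightarrow> real^'a \<Rightarrow> real" where
  "pmd_obj P c h \<gamma> \<omega> g\<omega> \<eta> \<pi> s p =
     \<eta> * ((\<Sum>a\<in>UNIV. Qf P c h \<gamma> \<pi> s a * p $ a) + h s p) + bregman \<omega> g\<omega> p (\<pi> s)"

end

theory Submission
  imports Defs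
begin

text \<open>
  The performance difference lemma expresses V^\<pi>' - V^\<pi> as the resolvent (I - \<gamma> P_\<pi>')^-1
  applied to the advantage \<psi>^\<pi>(-, \<pi>'). Together with the three-point property of the Bregman
  proximal step it shows that PMD never increases the value and that, writing f_t and D_t for the
  suboptimality of the t-th iterate and its Bregman distance from \<pi>*, and R for the resolvent
  of \<pi>*,
    \<eta>_t (R f_(t+1) - R f_t + f_t) + R D_(t+1) \<le> R D_t.
  The step size is constant on epochs of length N, so summing over epoch k and using that f_t
  decreases bounds N f_((k+1)N) by the potential R f_(kN) + R D_(kN) / \<eta>_(kN). As N \<ge> 4/(1 - \<gamma>),
  the suboptimality halves from one epoch to the next, and since the step size is multiplied
  by four the potential halves as well.
\<close>

section \<open>Bregman proximal steps\<close>

lemma convex_prob_simplex: "convex (prob_simplex :: (real^'a::finite) set)"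
proof (rule convexI)
  fix x y :: "real^'a" and u v :: real
  assume "x \<in> prob_simplex" "y \<in> prob_simplex" "0 \<le> u" "0 \<le> v" "u + v = 1"
  then show "u *\<^sub>R x + v *\<^sub>R y \<in> prob_simplex"
    by (auto simp: prob_simplex_def sum.distrib simp flip: sum_distrib_left)
qed

lemma prob_simplex_component_le_one:
  assumes "p \<in> prob_simplex" shows "p $ a \<le> 1"
proof -
  have "p $ a \<le> (\<Sum>b\<in>UNIV. p $ b)"
    using assms by (intro member_le_sum) (auto simp: prob_simplex_def)
  then show ?thesis using assms by (simp add: prob_simplex_def)
qed

lemma tendsto_difference_quotient_segment:
  fixes f :: "'v::real_inner \<Rightarrow> real"
  assumes S: "convex S" "x \<in> S" "y \<in> S"
    and f: "(f has_derivative (\<lambda>v. g \<bullet> v)) (at x within S)"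
  shows "((\<lambda>l. (f ((1 - l) *\<^sub>R x + l *\<^sub>R y) - f x) / l) \<longlongrightarrow> g \<bullet> (y - x)) (at_right 0)"
proof -
  let ?seg = "\<lambda>l::real. (1 - l) *\<^sub>R x + l *\<^sub>R y"
  have seg: "(?seg has_derivative (\<lambda>l. l *\<^sub>R (y - x))) (at 0 within {0..1})"
    by (auto intro!: derivative_eq_intros simp: algebra_simps)
  have "?seg ` {0..1} \<subseteq> S"
    using convexD_alt[OF S] by auto
  then have "(f has_derivative (\<lambda>v. g \<bullet> v)) (at (?seg 0) within ?seg ` {0..1})"
    using has_derivative_subset f by simp
  from diff_chain_within[OF seg this]
  have "((f \<circ> ?seg) has_field_derivative g \<bullet> (y - x)) (at 0 within {0..1})"
    by (simp add: has_field_derivative_def o_def mult_commute_abs)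
  then show ?thesis
    by (simp add: has_field_derivative_iff at_within_Icc_at_right o_def)
qed

lemma derivative_le_of_difference_quotient_le:
  fixes f :: "'v::real_inner \<Rightarrow> real"
  assumes "convex S" "x \<in> S" "y \<in> S"
    and "(f has_derivative (\<lambda>v. g \<bullet> v)) (at x within S)"
    and "\<And>l. 0 < l \<Longrightarrow> l < 1 \<Longrightarrow> (f ((1 - l) *\<^sub>R x + l *\<^sub>R y) - f x) / l \<le> K"
  shows "g \<bullet> (y - x) \<le> K"
proof (rule tendsto_le[OF _ tendsto_const tendsto_difference_quotient_segment[OF assms(1-4)]])
  show "\<forall>\<^sub>F l in at_right 0. (f ((1 - l) *\<^sub>R x + l *\<^sub>R y) - f x) / l \<le> K"
    using assms(5) by (intro eventually_at_rightI[of 0 1]) auto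
qed simp

lemma derivative_ge_of_difference_quotient_ge:
  fixes f :: "'v::real_inner \<Rightarrow> real"
  assumes "convex S" "x \<in> S" "y \<in> S"
    and "(f has_derivative (\<lambda>v. g \<bullet> v)) (at x within S)"
    and "\<And>l. 0 < l \<Longrightarrow> l < 1 \<Longrightarrow> K \<le> (f ((1 - l) *\<^sub>R x + l *\<^sub>R y) - f x) / l"
  shows "K \<le> g \<bullet> (y - x)"
proof (rule tendsto_le[OF _ tendsto_difference_quotient_segment[OF assms(1-4)] tendsto_const])
  show "\<forall>\<^sub>F l in at_right 0. K \<le> (f ((1 - l) *\<^sub>R x + l *\<^sub>R y) - f x) / l"
    using assms(5) by (intro eventually_at_rightI[of 0 1]) auto
qed simp

lemma convex_on_above_tangent_within:
  fixes f :: "'v::real_inner \<Rightarrow> real"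
  assumes "convex S" "convex_on S f" "x \<in> S" "y \<in> S"
    and "(f has_derivative (\<lambda>v. g \<bullet> v)) (at x within S)"
  shows "f x + g \<bullet> (y - x) \<le> f y"
proof -
  have "g \<bullet> (y - x) \<le> f y - f x"
  proof (rule derivative_le_of_difference_quotient_le[OF assms(1,3,4,5)])
    fix l :: real assume l: "0 < l" "l < 1"
    have "f ((1 - l) *\<^sub>R x + l *\<^sub>R y) \<le> (1 - l) * f x + l * f y"
      using convex_onD[OF assms(2)] l assms(3,4) by simp
    then have "f ((1 - l) *\<^sub>R x + l *\<^sub>R y) - f x \<le> (f y - f x) * l"
      by (simp add: algebra_simps)
    then show "(f ((1 - l) *\<^sub>R x + l *\<^sub>R y) - f x) / l \<le> f y - f x"
      using l by (simp only: pos_divide_le_eq)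
  qed
  then show ?thesis by simp
qed

lemma bregman_nonneg:
  assumes "convex S" "convex_on S \<omega>"
    and "\<And>p. p \<in> S \<Longrightarrow> (\<omega> has_derivative (\<lambda>v. g\<omega> p \<bullet> v)) (at p within S)"
    and "p \<in> S" "q \<in> S"
  shows "0 \<le> bregman \<omega> g\<omega> q p"
  using convex_on_above_tangent_within[OF assms(1,2,4,5) assms(3)[OF assms(4)]]
  by (simp add: bregman_def)

lemma bregman_prox_three_point:
  assumes S: "convex S"
    and \<omega>: "\<And>p. p \<in> S \<Longrightarrow> (\<omega> has_derivative (\<lambda>v. g\<omega> p \<bullet> v)) (at p within S)"
    and F: "convex_on S F"
    and "p0 \<in> S" "p1 \<in> S" "p \<in> S"
    and min: "\<And>q. q \<in> S \<Longrightarrow> F p1 + bregman \<omega> g\<omega> p1 p0 \<le> F q + bregman \<omega> g\<omega> q p0"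
  shows "F p1 + bregman \<omega> g\<omega> p1 p0 + bregman \<omega> g\<omega> p p1 \<le> F p + bregman \<omega> g\<omega> p p0"
proof -
  define K where "K = F p - F p1 - g\<omega> p0 \<bullet> (p - p1)"
  \<comment> \<open>first-order optimality of p1 in the direction of p\<close>
  have "- K \<le> g\<omega> p1 \<bullet> (p - p1)"
  proof (rule derivative_ge_of_difference_quotient_ge[OF S assms(5,6) \<omega>[OF assms(5)]])
    fix l :: real assume l: "0 < l" "l < 1"
    define q where "q = (1 - l) *\<^sub>R p1 + l *\<^sub>R p"
    have "q \<in> S" using convexD_alt[OF S assms(5,6)] l by (simp add: q_def)
    have "F q \<le> (1 - l) * F p1 + l * F p"
      using convex_onD[OF F] l assms(5,6) by (simp add: q_def)
    moreover have "g\<omega> p0 \<bullet> (q - p0) = g\<omega> p0 \<bullet> (p1 - p0) + l * (g\<omega> p0 \<bullet> (p - p1))"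
      by (simp add: q_def algebra_simps)
    ultimately have "0 \<le> l * K + (\<omega> q - \<omega> p1)"
      using min[OF \<open>q \<in> S\<close>] by (simp add: K_def bregman_def algebra_simps)
    then show "- K \<le> (\<omega> ((1 - l) *\<^sub>R p1 + l *\<^sub>R p) - \<omega> p1) / l"
      using l by (simp add: q_def le_divide_eq algebra_simps)
  qed
  then show ?thesis
    by (simp add: K_def bregman_def algebra_simps)
qed

lemma convex_on_linear_form:
  "convex S \<Longrightarrow> convex_on S (\<lambda>p::real^'a::finite. \<Sum>a\<in>UNIV. w a * p $ a)"
  unfolding convex_on_def by (simp add: sum.distrib sum_distrib_left algebra_simps)

lemma subgradient_of_relative_strong_convexity:
  assumes "convex S" "convex_on S \<omega>"
    and "\<And>p. p \<in> S \<Longrightarrow> (\<omega> has_derivative (\<lambda>v. g\<omega> p \<bullet> v)) (at p within S)"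
    and "p \<in> S" "q \<in> S" "0 \<le> \<mu>"
    and "\<mu> * bregman \<omega> g\<omega> q p \<le> f q - f p - (\<Sum>a\<in>UNIV. g a * (q $ a - p $ a))"
  shows "f p + (\<Sum>a\<in>UNIV. g a * (q $ a - p $ a)) \<le> f q"
  using assms(7) mult_nonneg_nonneg[OF assms(6) bregman_nonneg[OF assms(1-5)]] by linarith

section \<open>Markov operators and the resolvent\<close>

definition trans_op :: "('s::finite \<Rightarrow> 'a::finite \<Rightarrow> 's \<Rightarrow> real) \<Rightarrow> ('s \<Rightarrow> real^'a)
    \<Rightarrow> ('s \<Rightarrow> real) \<Rightarrow> 's \<Rightarrow> real" where
  "trans_op P \<pi> f s = (\<Sum>a\<in>UNIV. \<pi> s $ a * (\<Sum>s'\<in>UNIV. P s a s' * f s'))"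

definition resolvent :: "('s::finite \<Rightarrow> 'a::finite \<Rightarrow> 's \<Rightarrow> real) \<Rightarrow> ('s \<Rightarrow> real^'a)
    \<Rightarrow> real \<Rightarrow> ('s \<Rightarrow> real) \<Rightarrow> 's \<Rightarrow> real" where
  "resolvent P \<pi> \<gamma> f s = (\<Sum>t. \<gamma> ^ t * (trans_op P \<pi> ^^ t) f s)"

lemma trans_op_eq_weighted_sum:
  "trans_op P \<pi> f s = (\<Sum>s'\<in>UNIV. (\<Sum>a\<in>UNIV. \<pi> s $ a * P s a s') * f s')"
  unfolding trans_op_def sum_distrib_left sum_distrib_right mult.assoc by (rule sum.swap)

lemma state_dist_expectation:
  "(\<Sum>s'\<in>UNIV. state_dist P \<pi> \<mu> t s' * f s') = (\<Sum>s\<in>UNIV. \<mu> s * (trans_op P \<pi> ^^ t) f s)"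
proof (induction t arbitrary: f)
  case 0
  then show ?case by simp
next
  case (Suc t)
  have "(\<Sum>s'\<in>UNIV. state_dist P \<pi> \<mu> (Suc t) s' * f s')
      = (\<Sum>s\<in>UNIV. state_dist P \<pi> \<mu> t s * trans_op P \<pi> f s)"
    by (simp add: trans_op_eq_weighted_sum sum_distrib_left sum_distrib_right mult.assoc)
      (rule sum.swap)
  also have "\<dots> = (\<Sum>s\<in>UNIV. \<mu> s * (trans_op P \<pi> ^^ Suc t) f s)"
    by (simp only: Suc.IH funpow_Suc_right o_apply)
  finally show ?case .
qed

lemma Vf_eq_resolvent: "Vf P c h \<gamma> \<pi> = resolvent P \<pi> \<gamma> (step_cost c h \<pi>)"
  by (simp add: fun_eq_iff Vf_def resolvent_def state_dist_expectation flip: of_bool_def)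

lemma trans_op_add: "trans_op P \<pi> (\<lambda>x. f x + g x) = (\<lambda>s. trans_op P \<pi> f s + trans_op P \<pi> g s)"
  by (simp add: fun_eq_iff trans_op_def sum.distrib algebra_simps)

lemma trans_op_scale: "trans_op P \<pi> (\<lambda>x. r * f x) = (\<lambda>s. r * trans_op P \<pi> f s)"
  by (simp add: fun_eq_iff trans_op_def sum_distrib_left algebra_simps)

lemma trans_pow_add:
  "(trans_op P \<pi> ^^ t) (\<lambda>x. f x + g x) = (\<lambda>s. (trans_op P \<pi> ^^ t) f s + (trans_op P \<pi> ^^ t) g s)"
  by (induction t) (simp_all add: trans_op_add)

lemma trans_pow_scale:
  "(trans_op P \<pi> ^^ t) (\<lambda>x. r * f x) = (\<lambda>s. r * (trans_op P \<pi> ^^ t) f s)"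
  by (induction t) (simp_all add: trans_op_scale)

locale markov_kernel =
  fixes P :: "'s::finite \<Rightarrow> 'a::finite \<Rightarrow> 's \<Rightarrow> real"
  assumes P_nonneg: "\<And>s a s'. 0 \<le> P s a s'"
    and P_sum: "\<And>s a. (\<Sum>s'\<in>UNIV. P s a s') = 1"
begin

lemma trans_op_mono:
  "is_policy \<pi> \<Longrightarrow> (\<And>x. f x \<le> g x) \<Longrightarrow> trans_op P \<pi> f s \<le> trans_op P \<pi> g s"
  unfolding trans_op_def is_policy_def prob_simplex_def
  by (intro sum_mono mult_left_mono P_nonneg) auto

lemma trans_op_const: "is_policy \<pi> \<Longrightarrow> trans_op P \<pi> (\<lambda>_. r) = (\<lambda>_. r)"
  by (simp add: fun_eq_iff trans_op_def is_policy_def prob_simplex_def P_sum flip: sum_distrib_right)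

lemma trans_pow_mono:
  "is_policy \<pi> \<Longrightarrow> (\<And>x. f x \<le> g x) \<Longrightarrow> (trans_op P \<pi> ^^ t) f s \<le> (trans_op P \<pi> ^^ t) g s"
  by (induction t arbitrary: s) (auto intro: trans_op_mono)

lemma trans_pow_const:
  assumes "is_policy \<pi>"
  shows "(trans_op P \<pi> ^^ t) (\<lambda>_. r) = (\<lambda>_. r)"
  by (induction t) (simp_all add: trans_op_const[OF assms])

lemma trans_pow_abs_le:
  assumes "is_policy \<pi>"
  shows "\<bar>(trans_op P \<pi> ^^ t) f s\<bar> \<le> (\<Sum>x\<in>UNIV. \<bar>f x\<bar>)"
proof -
  let ?B = "\<Sum>x\<in>UNIV. \<bar>f x\<bar>"
  have "- ?B \<le> f x \<and> f x \<le> ?B" for x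
    using member_le_sum[of x UNIV "\<lambda>x. \<bar>f x\<bar>"] by (auto simp: abs_le_iff)
  then have "(trans_op P \<pi> ^^ t) (\<lambda>_. - ?B) s \<le> (trans_op P \<pi> ^^ t) f s"
    and "(trans_op P \<pi> ^^ t) f s \<le> (trans_op P \<pi> ^^ t) (\<lambda>_. ?B) s"
    using assms by (auto intro!: trans_pow_mono)
  then show ?thesis
    using assms by (simp add: trans_pow_const abs_le_iff)
qed

end

locale discounted_mdp = markov_kernel P for P :: "'s::finite \<Rightarrow> 'a::finite \<Rightarrow> 's \<Rightarrow> real" +
  fixes \<gamma> :: real
  assumes discount_nonneg: "0 \<le> \<gamma>" and discount_less_one: "\<gamma> < 1"
begin

lemma summable_resolvent:
  assumes "is_policy \<pi>"
  shows "summable (\<lambda>t. \<gamma> ^ t * (trans_op P \<pi> ^^ t) f s)"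
proof (rule summable_comparison_test)
  show "\<exists>N. \<forall>t\<ge>N. norm (\<gamma> ^ t * (trans_op P \<pi> ^^ t) f s) \<le> \<gamma> ^ t * (\<Sum>x\<in>UNIV. \<bar>f x\<bar>)"
    using trans_pow_abs_le[OF assms] discount_nonneg by (auto simp: abs_mult intro!: mult_left_mono)
  show "summable (\<lambda>t. \<gamma> ^ t * (\<Sum>x\<in>UNIV. \<bar>f x\<bar>))"
    using discount_nonneg discount_less_one by (intro summable_mult2 summable_geometric) auto
qed

lemma resolvent_add:
  "is_policy \<pi> \<Longrightarrow> resolvent P \<pi> \<gamma> (\<lambda>x. f x + g x) s = resolvent P \<pi> \<gamma> f s + resolvent P \<pi> \<gamma> g s"
  unfolding resolvent_def trans_pow_add distrib_left by (intro suminf_add[symmetric] summable_resolvent)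

lemma resolvent_scale:
  "is_policy \<pi> \<Longrightarrow> resolvent P \<pi> \<gamma> (\<lambda>x. r * f x) s = r * resolvent P \<pi> \<gamma> f s"
  unfolding resolvent_def trans_pow_scale mult.left_commute[of _ r]
  by (rule suminf_mult) (rule summable_resolvent)

lemma resolvent_diff:
  "is_policy \<pi> \<Longrightarrow> resolvent P \<pi> \<gamma> (\<lambda>x. f x - g x) s = resolvent P \<pi> \<gamma> f s - resolvent P \<pi> \<gamma> g s"
  using resolvent_add[of \<pi> f "\<lambda>x. (-1) * g x" s] resolvent_scale[of \<pi> "-1" g s] by simp

lemma resolvent_mono:
  "is_policy \<pi> \<Longrightarrow> (\<And>x. f x \<le> g x) \<Longrightarrow> resolvent P \<pi> \<gamma> f s \<le> resolvent P \<pi> \<gamma> g s"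
  unfolding resolvent_def using discount_nonneg
  by (intro suminf_le summable_resolvent mult_left_mono trans_pow_mono) auto

lemma resolvent_nonneg:
  "is_policy \<pi> \<Longrightarrow> (\<And>x. 0 \<le> f x) \<Longrightarrow> 0 \<le> resolvent P \<pi> \<gamma> f s"
  using resolvent_mono[of \<pi> "\<lambda>_. 0" f s] by (simp add: resolvent_def trans_pow_const)

lemma resolvent_const: "is_policy \<pi> \<Longrightarrow> resolvent P \<pi> \<gamma> (\<lambda>_. r) s = r / (1 - \<gamma>)"
  using discount_nonneg discount_less_one
  by (simp add: resolvent_def trans_pow_const suminf_geometric summable_geometric suminf_mult2[symmetric])

lemma resolvent_unfold:
  assumes "is_policy \<pi>"
  shows "resolvent P \<pi> \<gamma> f s = f s + \<gamma> * resolvent P \<pi> \<gamma> (trans_op P \<pi> f) s"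
proof -
  have "resolvent P \<pi> \<gamma> f s = f s + (\<Sum>t. \<gamma> ^ Suc t * (trans_op P \<pi> ^^ Suc t) f s)"
    unfolding resolvent_def using suminf_split_head[OF summable_resolvent[OF assms]] by simp
  also have "(\<Sum>t. \<gamma> ^ Suc t * (trans_op P \<pi> ^^ Suc t) f s)
      = (\<Sum>t. \<gamma> * (\<gamma> ^ t * (trans_op P \<pi> ^^ t) (trans_op P \<pi> f) s))"
    by (simp only: funpow_Suc_right o_apply power_Suc mult.assoc)
  also have "\<dots> = \<gamma> * resolvent P \<pi> \<gamma> (trans_op P \<pi> f) s"
    unfolding resolvent_def by (rule suminf_mult[OF summable_resolvent[OF assms]])
  finally show ?thesis .
qed

lemma resolvent_le_self:
  assumes "is_policy \<pi>" "\<And>x. f x \<le> 0"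
  shows "resolvent P \<pi> \<gamma> f s \<le> f s"
proof -
  have "resolvent P \<pi> \<gamma> (trans_op P \<pi> f) s \<le> resolvent P \<pi> \<gamma> (\<lambda>_. 0) s"
    using assms trans_op_mono[of \<pi> f "\<lambda>_. 0"] by (intro resolvent_mono) (simp_all add: trans_op_const)
  then have "\<gamma> * resolvent P \<pi> \<gamma> (trans_op P \<pi> f) s \<le> 0"
    using assms(1) discount_nonneg by (simp add: resolvent_const mult_nonneg_nonpos)
  then show ?thesis
    using resolvent_unfold[OF assms(1), of f s] by linarith
qed

lemma resolvent_weighted_sums:
  assumes "is_policy \<pi>"
  shows "(\<lambda>t. \<gamma> ^ t * (\<Sum>x\<in>UNIV. w x * (trans_op P \<pi> ^^ t) f x))
           sums (\<Sum>x\<in>UNIV. w x * resolvent P \<pi> \<gamma> f x)"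
proof -
  have "(\<lambda>t. \<Sum>x\<in>UNIV. w x * (\<gamma> ^ t * (trans_op P \<pi> ^^ t) f x))
      sums (\<Sum>x\<in>UNIV. w x * resolvent P \<pi> \<gamma> f x)"
    unfolding resolvent_def using summable_resolvent[OF assms]
    by (intro sums_sum sums_mult summable_sums)
  then show ?thesis
    by (simp only: sum_distrib_left mult.left_commute)
qed

lemma trans_op_resolvent:
  assumes "is_policy \<pi>"
  shows "trans_op P \<pi> (resolvent P \<pi> \<gamma> f) s = resolvent P \<pi> \<gamma> (trans_op P \<pi> f) s"
proof -
  have "trans_op P \<pi> (resolvent P \<pi> \<gamma> f) s
      = (\<Sum>t. \<gamma> ^ t * trans_op P \<pi> ((trans_op P \<pi> ^^ t) f) s)"
    unfolding trans_op_eq_weighted_sum[of P \<pi> _ s]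
    by (rule sums_unique[OF resolvent_weighted_sums[OF assms]])
  then show ?thesis
    by (simp add: resolvent_def funpow_swap1)
qed

lemma resolvent_bellman:
  "is_policy \<pi> \<Longrightarrow> resolvent P \<pi> \<gamma> f s = f s + \<gamma> * trans_op P \<pi> (resolvent P \<pi> \<gamma> f) s"
  using resolvent_unfold[of \<pi> f s] trans_op_resolvent[of \<pi> f s] by simp

lemma resolvent_inverse:
  assumes "is_policy \<pi>"
  shows "resolvent P \<pi> \<gamma> (\<lambda>x. u x - \<gamma> * trans_op P \<pi> u x) s = u s"
proof -
  have "resolvent P \<pi> \<gamma> (\<lambda>x. u x - \<gamma> * trans_op P \<pi> u x) s
      = resolvent P \<pi> \<gamma> u s - \<gamma> * resolvent P \<pi> \<gamma> (trans_op P \<pi> u) s"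
    using assms by (simp add: resolvent_diff resolvent_scale)
  then show ?thesis
    using resolvent_unfold[OF assms, of u s] by simp
qed

end

section \<open>Values, advantages and the performance difference\<close>

lemma abs_sum_simplex_le:
  assumes "p \<in> prob_simplex"
  shows "\<bar>\<Sum>a\<in>UNIV. f a * p $ a\<bar> \<le> (\<Sum>a\<in>UNIV. \<bar>f a\<bar>)"
proof -
  have "\<bar>f a * p $ a\<bar> \<le> \<bar>f a\<bar>" for a
    using assms prob_simplex_component_le_one[OF assms, of a]
    by (auto simp: abs_mult prob_simplex_def intro: mult_left_le)
  then show ?thesis
    by (rule order_trans[OF sum_abs sum_mono])
qed

context discounted_mdp
begin

lemma Vf_bellman:
  "is_policy \<pi> \<Longrightarrow> Vf P c h \<gamma> \<pi> s = step_cost c h \<pi> s + \<gamma> * trans_op P \<pi> (Vf P c h \<gamma> \<pi>) s"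
  unfolding Vf_eq_resolvent by (rule resolvent_bellman)

lemma Qf_bellman:
  assumes "is_policy \<pi>"
  shows "Qf P c h \<gamma> \<pi> s a = c s a + h s (\<pi> s) + \<gamma> * (\<Sum>s'\<in>UNIV. P s a s' * Vf P c h \<gamma> \<pi> s')"
proof -
  have "(\<lambda>t. \<gamma> * (\<gamma> ^ t * (\<Sum>s'\<in>UNIV. P s a s' * (trans_op P \<pi> ^^ t) (step_cost c h \<pi>) s')))
      sums (\<gamma> * (\<Sum>s'\<in>UNIV. P s a s' * Vf P c h \<gamma> \<pi> s'))"
    unfolding Vf_eq_resolvent by (intro sums_mult resolvent_weighted_sums assms)
  then show ?thesis
    unfolding Qf_def state_dist_expectation by (simp add: sums_iff mult.assoc)
qed

lemma adv_at_policy: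
  assumes "is_policy \<pi>" "is_policy \<pi>'"
  shows "adv P c h \<gamma> \<pi> s (\<pi>' s)
    = step_cost c h \<pi>' s + \<gamma> * trans_op P \<pi>' (Vf P c h \<gamma> \<pi>) s - Vf P c h \<gamma> \<pi> s"
proof -
  have "(\<Sum>a\<in>UNIV. \<pi>' s $ a) = 1"
    using assms(2) by (simp add: is_policy_def prob_simplex_def)
  then show ?thesis
    using assms(1)
    by (simp add: adv_def Qf_bellman step_cost_def trans_op_def sum.distrib algebra_simps
        flip: sum_distrib_left sum_distrib_right)
qed

lemma adv_self: "is_policy \<pi> \<Longrightarrow> adv P c h \<gamma> \<pi> s (\<pi> s) = 0"
  using Vf_bellman[of \<pi>] by (simp add: adv_at_policy)

lemma performance_difference:
  assumes "is_policy \<pi>" "is_policy \<pi>'"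
  shows "Vf P c h \<gamma> \<pi>' s - Vf P c h \<gamma> \<pi> s
    = resolvent P \<pi>' \<gamma> (\<lambda>x. adv P c h \<gamma> \<pi> x (\<pi>' x)) s"
proof -
  let ?V = "Vf P c h \<gamma> \<pi>"
  have "resolvent P \<pi>' \<gamma> (\<lambda>x. adv P c h \<gamma> \<pi> x (\<pi>' x)) s
      = resolvent P \<pi>' \<gamma> (\<lambda>x. step_cost c h \<pi>' x - (?V x - \<gamma> * trans_op P \<pi>' ?V x)) s"
    using assms by (simp add: adv_at_policy algebra_simps)
  also have "\<dots> = resolvent P \<pi>' \<gamma> (step_cost c h \<pi>') s
      - resolvent P \<pi>' \<gamma> (\<lambda>x. ?V x - \<gamma> * trans_op P \<pi>' ?V x) s"
    by (rule resolvent_diff[OF assms(2)])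
  also have "\<dots> = Vf P c h \<gamma> \<pi>' s - ?V s"
    by (simp only: resolvent_inverse[OF assms(2)] Vf_eq_resolvent)
  finally show ?thesis ..
qed

lemma neg_adv_le_adv_gap:
  assumes "is_policy \<pi>" "p \<in> prob_simplex"
    and subgrad: "\<And>q. q \<in> prob_simplex \<Longrightarrow>
      h s (\<pi> s) + (\<Sum>a\<in>UNIV. g a * (q $ a - \<pi> s $ a)) \<le> h s q"
  shows "- adv P c h \<gamma> \<pi> s p \<le> adv_gap P c h \<gamma> \<pi> s"
  unfolding adv_gap_def
proof (rule cSUP_upper[OF assms(2)])
  let ?B = "Vf P c h \<gamma> \<pi> s + (\<Sum>a\<in>UNIV. \<bar>Qf P c h \<gamma> \<pi> s a\<bar>) + 2 * (\<Sum>a\<in>UNIV. \<bar>g a\<bar>)"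
  show "bdd_above ((\<lambda>q. - adv P c h \<gamma> \<pi> s q) ` prob_simplex)"
  proof (rule bdd_aboveI2)
    fix q :: "real^'a" assume q: "q \<in> prob_simplex"
    have \<pi>: "\<pi> s \<in> prob_simplex"
      using assms(1) by (simp add: is_policy_def)
    have "(\<Sum>a\<in>UNIV. g a * (q $ a - \<pi> s $ a)) = (\<Sum>a\<in>UNIV. g a * q $ a) - (\<Sum>a\<in>UNIV. g a * \<pi> s $ a)"
      by (simp add: right_diff_distrib sum_subtractf)
    then show "- adv P c h \<gamma> \<pi> s q \<le> ?B"
      using subgrad[OF q] abs_sum_simplex_le[OF q, of "Qf P c h \<gamma> \<pi> s"]
        abs_sum_simplex_le[OF q, of g] abs_sum_simplex_le[OF \<pi>, of g]
      unfolding adv_def abs_le_iff by linarith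
  qed
qed

lemma value_sub_le_max_adv_gap:
  assumes "is_policy \<pi>" "is_policy \<pi>'"
    and subgrad: "\<And>x q. q \<in> prob_simplex \<Longrightarrow>
      h x (\<pi> x) + (\<Sum>a\<in>UNIV. g x a * (q $ a - \<pi> x $ a)) \<le> h x q"
  shows "Vf P c h \<gamma> \<pi> s - Vf P c h \<gamma> \<pi>' s \<le> Max (range (adv_gap P c h \<gamma> \<pi>)) / (1 - \<gamma>)"
proof -
  have "- adv P c h \<gamma> \<pi> x (\<pi>' x) \<le> Max (range (adv_gap P c h \<gamma> \<pi>))" for x
  proof -
    have "- adv P c h \<gamma> \<pi> x (\<pi>' x) \<le> adv_gap P c h \<gamma> \<pi> x"
      using assms(1,2) subgrad by (intro neg_adv_le_adv_gap) (auto simp: is_policy_def)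
    also have "\<dots> \<le> Max (range (adv_gap P c h \<gamma> \<pi>))"
      by (rule Max_ge) auto
    finally show ?thesis .
  qed
  then have "resolvent P \<pi>' \<gamma> (\<lambda>x. (-1) * adv P c h \<gamma> \<pi> x (\<pi>' x)) s
      \<le> resolvent P \<pi>' \<gamma> (\<lambda>_. Max (range (adv_gap P c h \<gamma> \<pi>))) s"
    using assms(2) by (intro resolvent_mono) auto
  then show ?thesis
    using performance_difference[OF assms(1,2), where c=c and h=h and s=s]
      resolvent_scale[OF assms(2), of "-1" "\<lambda>x. adv P c h \<gamma> \<pi> x (\<pi>' x)" s]
    by (simp add: resolvent_const[OF assms(2)])
qed

end

section \<open>Policy mirror descent\<close>

locale pmd = discounted_mdp P \<gamma> for P :: "'s::finite \<Rightarrow> 'a::finite \<Rightarrow> 's \<Rightarrow> real" and \<gamma> +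
  fixes c :: "'s \<Rightarrow> 'a \<Rightarrow> real" and h :: "'s \<Rightarrow> real^'a \<Rightarrow> real"
    and \<omega> :: "real^'a \<Rightarrow> real" and g\<omega> :: "real^'a \<Rightarrow> real^'a"
    and \<pi>star :: "'s \<Rightarrow> real^'a" and \<pi>s :: "nat \<Rightarrow> 's \<Rightarrow> real^'a" and \<eta> :: "nat \<Rightarrow> real"
  assumes omega_convex: "convex_on prob_simplex \<omega>"
    and omega_diff: "\<And>p. p \<in> prob_simplex \<Longrightarrow>
      (\<omega> has_derivative (\<lambda>v. g\<omega> p \<bullet> v)) (at p within prob_simplex)"
    and h_convex: "\<And>s. convex_on prob_simplex (h s)"
    and optimal_policy: "is_policy \<pi>star"
    and optimal: "\<And>\<pi> s. is_policy \<pi> \<Longrightarrow> Vf P c h \<gamma> \<pi>star s \<le> Vf P c h \<gamma> \<pi> s"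
    and iterate_policy: "\<And>t. is_policy (\<pi>s t)"
    and step_pos: "\<And>t. 0 < \<eta> t"
    and pmd_step: "\<And>t s p. p \<in> prob_simplex \<Longrightarrow>
      pmd_obj P c h \<gamma> \<omega> g\<omega> (\<eta> t) (\<pi>s t) s (\<pi>s (Suc t) s) \<le> pmd_obj P c h \<gamma> \<omega> g\<omega> (\<eta> t) (\<pi>s t) s p"
begin

definition subopt :: "nat \<Rightarrow> 's \<Rightarrow> real" where
  "subopt t s = Vf P c h \<gamma> (\<pi>s t) s - Vf P c h \<gamma> \<pi>star s"

definition dist_opt :: "nat \<Rightarrow> 's \<Rightarrow> real" where
  "dist_opt t s = bregman \<omega> g\<omega> (\<pi>star s) (\<pi>s t s)"

lemma iterate_mem: "\<pi>s t s \<in> prob_simplex"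
  using iterate_policy by (simp add: is_policy_def)

lemma optimal_mem: "\<pi>star s \<in> prob_simplex"
  using optimal_policy by (simp add: is_policy_def)

lemma bregman_simplex_nonneg: "p \<in> prob_simplex \<Longrightarrow> q \<in> prob_simplex \<Longrightarrow> 0 \<le> bregman \<omega> g\<omega> q p"
  by (rule bregman_nonneg[OF convex_prob_simplex omega_convex omega_diff])

lemma subopt_nonneg: "0 \<le> subopt t s"
  using optimal[OF iterate_policy] by (simp add: subopt_def)

lemma dist_opt_nonneg: "0 \<le> dist_opt t s"
  by (simp add: dist_opt_def bregman_simplex_nonneg iterate_mem optimal_mem)

lemma pmd_three_point:
  assumes "q \<in> prob_simplex"
  shows "\<eta> t * adv P c h \<gamma> (\<pi>s t) s (\<pi>s (Suc t) s) + bregman \<omega> g\<omega> (\<pi>s (Suc t) s) (\<pi>s t s)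
      + bregman \<omega> g\<omega> q (\<pi>s (Suc t) s)
    \<le> \<eta> t * adv P c h \<gamma> (\<pi>s t) s q + bregman \<omega> g\<omega> q (\<pi>s t s)"
proof -
  let ?F = "\<lambda>p. \<eta> t * ((\<Sum>a\<in>UNIV. Qf P c h \<gamma> (\<pi>s t) s a * p $ a) + h s p)"
  have "convex_on prob_simplex ?F"
    using step_pos[of t] convex_prob_simplex
    by (intro convex_on_cmul convex_on_add convex_on_linear_form h_convex) auto
  then have "?F (\<pi>s (Suc t) s) + bregman \<omega> g\<omega> (\<pi>s (Suc t) s) (\<pi>s t s) + bregman \<omega> g\<omega> q (\<pi>s (Suc t) s)
      \<le> ?F q + bregman \<omega> g\<omega> q (\<pi>s t s)"
    using pmd_step[of _ t s]
    by (intro bregman_prox_three_point[OF convex_prob_simplex omega_diff _ iterate_mem iterate_mem assms])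
      (auto simp: pmd_obj_def iterate_mem)
  then show ?thesis
    by (simp add: adv_def algebra_simps)
qed

lemma pmd_adv_nonpos: "adv P c h \<gamma> (\<pi>s t) s (\<pi>s (Suc t) s) \<le> 0"
proof -
  have "\<eta> t * adv P c h \<gamma> (\<pi>s t) s (\<pi>s (Suc t) s) \<le> 0"
    using pmd_three_point[OF iterate_mem[of t s], where t=t and s=s]
      bregman_simplex_nonneg[OF iterate_mem[of t s] iterate_mem[of "Suc t" s]]
      bregman_simplex_nonneg[OF iterate_mem[of "Suc t" s] iterate_mem[of t s]]
    by (simp add: adv_self iterate_policy bregman_def)
  then show ?thesis
    using step_pos[of t] by (simp add: mult_le_0_iff)
qed

lemma pmd_value_step:
  "Vf P c h \<gamma> (\<pi>s (Suc t)) s - Vf P c h \<gamma> (\<pi>s t) s \<le> adv P c h \<gamma> (\<pi>s t) s (\<pi>s (Suc t) s)"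
  unfolding performance_difference[OF iterate_policy iterate_policy]
  by (rule resolvent_le_self[OF iterate_policy pmd_adv_nonpos])

lemma subopt_antimono: "subopt (Suc t) s \<le> subopt t s"
  using pmd_value_step[of t s] pmd_adv_nonpos[of t s] by (simp add: subopt_def)

lemma pmd_descent:
  "\<eta> t * (resolvent P \<pi>star \<gamma> (subopt (Suc t)) s - resolvent P \<pi>star \<gamma> (subopt t) s + subopt t s)
     + resolvent P \<pi>star \<gamma> (dist_opt (Suc t)) s
   \<le> resolvent P \<pi>star \<gamma> (dist_opt t) s"
proof -
  let ?R = "resolvent P \<pi>star \<gamma>"
  let ?A = "\<lambda>x. adv P c h \<gamma> (\<pi>s t) x (\<pi>star x)"
  have "\<eta> t * (subopt (Suc t) x - subopt t x) + dist_opt (Suc t) x \<le> \<eta> t * ?A x + dist_opt t x" for x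
  proof -
    have "subopt (Suc t) x - subopt t x \<le> adv P c h \<gamma> (\<pi>s t) x (\<pi>s (Suc t) x)"
      using pmd_value_step by (simp add: subopt_def)
    then have "\<eta> t * (subopt (Suc t) x - subopt t x) \<le> \<eta> t * adv P c h \<gamma> (\<pi>s t) x (\<pi>s (Suc t) x)"
      using step_pos[of t] by (simp add: mult_left_mono)
    then show ?thesis
      using pmd_three_point[OF optimal_mem[of x], where t=t and s=x]
        bregman_simplex_nonneg[OF iterate_mem[of t x] iterate_mem[of "Suc t" x]]
      unfolding dist_opt_def by linarith
  qed
  then have "?R (\<lambda>x. \<eta> t * (subopt (Suc t) x - subopt t x) + dist_opt (Suc t) x) s
      \<le> ?R (\<lambda>x. \<eta> t * ?A x + dist_opt t x) s"
    by (intro resolvent_mono optimal_policy)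
  moreover have "?R ?A s = - subopt t s"
    using performance_difference[OF iterate_policy optimal_policy, where c=c and h=h and s=s]
    by (simp add: subopt_def)
  ultimately show ?thesis
    by (simp add: resolvent_add resolvent_scale resolvent_diff optimal_policy algebra_simps)
qed

end

section \<open>Step sizes growing geometrically over epochs\<close>

lemma descent_telescope:
  fixes A B a :: "nat \<Rightarrow> real"
  assumes "0 < e"
    and descent: "\<And>t. m \<le> t \<Longrightarrow> t < m + n \<Longrightarrow> e * (A (Suc t) - A t + a t) + B (Suc t) \<le> B t"
    and antimono: "\<And>t. a (Suc t) \<le> a t"
  shows "A (m + n) + n * a (m + n) + B (m + n) / e \<le> A m + B m / e"
  using descent
proof (induction n)
  case 0
  then show ?case by simp
next
  case (Suc n)
  have "A (m + n) + n * a (m + n) + B (m + n) / e \<le> A m + B m / e"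
    using Suc by simp
  moreover have "(e * (A (Suc (m + n)) - A (m + n) + a (m + n)) + B (Suc (m + n))) / e \<le> B (m + n) / e"
    using Suc.prems[of "m + n"] \<open>0 < e\<close> by (intro divide_right_mono) auto
  then have "A (Suc (m + n)) - A (m + n) + a (m + n) + B (Suc (m + n)) / e \<le> B (m + n) / e"
    using \<open>0 < e\<close> by (simp add: add_divide_distrib)
  moreover have "Suc n * a (Suc (m + n)) \<le> n * a (m + n) + a (m + n)"
    using antimono[of "m + n"] mult_left_mono[OF antimono[of "m + n"], of n] by (simp add: algebra_simps)
  ultimately show ?case by simp
qed

locale pmd_epoch_schedule = pmd P \<gamma> c h \<omega> g\<omega> \<pi>star \<pi>s \<eta>
  for P :: "'s::finite \<Rightarrow> 'a::finite \<Rightarrow> 's \<Rightarrow> real" and \<gamma> c h \<omega> g\<omega> \<pi>star \<pi>s \<eta> +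
  fixes N :: nat and \<eta>0 \<Delta> :: real
  assumes step_schedule: "\<And>t. \<eta> t = 4 ^ (t div N) * \<eta>0"
    and epoch_length: "4 / (1 - \<gamma>) \<le> N"
    and initial_subopt: "\<And>s. subopt 0 s \<le> \<Delta>"
    and initial_dist: "\<And>s. dist_opt 0 s \<le> \<eta>0 * \<Delta>"
begin

definition epoch_potential :: "nat \<Rightarrow> 's \<Rightarrow> real" where
  "epoch_potential k s = resolvent P \<pi>star \<gamma> (subopt (k * N)) s
     + resolvent P \<pi>star \<gamma> (dist_opt (k * N)) s / \<eta> (k * N)"

lemma epoch_length_pos: "0 < N"
  using epoch_length discount_less_one by (cases N) (auto simp: divide_le_0_iff)

lemma step_size_within_epoch: "j < N \<Longrightarrow> \<eta> (k * N + j) = \<eta> (k * N)"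
  using epoch_length_pos by (simp add: step_schedule)

lemma step_size_next_epoch: "\<eta> (Suc k * N) = 4 * \<eta> (k * N)"
  using epoch_length_pos by (simp add: step_schedule)

lemma epoch_telescope:
  "resolvent P \<pi>star \<gamma> (subopt (Suc k * N)) s + N * subopt (Suc k * N) s
     + resolvent P \<pi>star \<gamma> (dist_opt (Suc k * N)) s / \<eta> (k * N)
   \<le> epoch_potential k s"
proof -
  have "\<eta> (k * N) * (resolvent P \<pi>star \<gamma> (subopt (Suc t)) s - resolvent P \<pi>star \<gamma> (subopt t) s
      + subopt t s) + resolvent P \<pi>star \<gamma> (dist_opt (Suc t)) s
    \<le> resolvent P \<pi>star \<gamma> (dist_opt t) s" if "k * N \<le> t" "t < k * N + N" for t
    using pmd_descent[of t s] step_size_within_epoch[of "t - k * N" k] that by simp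
  from descent_telescope[where A="\<lambda>t. resolvent P \<pi>star \<gamma> (subopt t) s" and a="\<lambda>t. subopt t s"
      and B="\<lambda>t. resolvent P \<pi>star \<gamma> (dist_opt t) s" and m="k * N" and n=N,
      OF step_pos this subopt_antimono]
  show ?thesis
    by (simp add: epoch_potential_def add.commute)
qed

lemma epoch_end_bounds:
  assumes "epoch_potential k s \<le> X"
  shows "N * subopt (Suc k * N) s \<le> X"
    and "resolvent P \<pi>star \<gamma> (dist_opt (Suc k * N)) s / \<eta> (k * N) \<le> X"
proof -
  have "0 \<le> resolvent P \<pi>star \<gamma> (subopt (Suc k * N)) s"
    and "0 \<le> resolvent P \<pi>star \<gamma> (dist_opt (Suc k * N)) s / \<eta> (k * N)"
    and "0 \<le> N * subopt (Suc k * N) s"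
    using step_pos[of "k * N"]
    by (simp_all add: resolvent_nonneg optimal_policy subopt_nonneg dist_opt_nonneg)
  then show "N * subopt (Suc k * N) s \<le> X"
    and "resolvent P \<pi>star \<gamma> (dist_opt (Suc k * N)) s / \<eta> (k * N) \<le> X"
    using epoch_telescope[of k s] assms by linarith+
qed

lemma epoch_end_subopt:
  assumes "epoch_potential k s \<le> 2 * Y / (1 - \<gamma>)"
  shows "subopt (Suc k * N) s \<le> Y / 2"
proof -
  have "4 / (1 - \<gamma>) * subopt (Suc k * N) s \<le> N * subopt (Suc k * N) s"
    using epoch_length subopt_nonneg by (rule mult_right_mono)
  also have "\<dots> \<le> 2 * Y / (1 - \<gamma>)"
    by (rule epoch_end_bounds(1)[OF assms])
  finally have "4 * subopt (Suc k * N) s / (1 - \<gamma>) \<le> 2 * Y / (1 - \<gamma>)"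
    by simp
  then show ?thesis
    using discount_less_one by (simp add: divide_le_cancel)
qed

lemma epoch_potential_bound: "epoch_potential k s \<le> 2 * (1/2) ^ k * \<Delta> / (1 - \<gamma>)"
proof (induction k arbitrary: s)
  case 0
  have "resolvent P \<pi>star \<gamma> (subopt 0) s \<le> \<Delta> / (1 - \<gamma>)"
    using resolvent_mono[OF optimal_policy, of "subopt 0" "\<lambda>_. \<Delta>" s] initial_subopt
    by (simp add: resolvent_const optimal_policy)
  moreover have "resolvent P \<pi>star \<gamma> (dist_opt 0) s \<le> \<Delta> / (1 - \<gamma>) * \<eta>0"
    using resolvent_mono[OF optimal_policy, of "dist_opt 0" "\<lambda>_. \<eta>0 * \<Delta>" s] initial_dist
    by (simp add: resolvent_const optimal_policy mult.commute)
  then have "resolvent P \<pi>star \<gamma> (dist_opt 0) s / \<eta> 0 \<le> \<Delta> / (1 - \<gamma>)"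
    using step_pos[of 0] by (simp add: step_schedule pos_divide_le_eq)
  ultimately show ?case
    by (simp add: epoch_potential_def)
next
  case (Suc k)
  let ?Y = "(1/2) ^ k * \<Delta>"
  have "subopt (Suc k * N) x \<le> ?Y / 2" for x
    using Suc.IH by (intro epoch_end_subopt) (simp add: mult.assoc)
  then have "resolvent P \<pi>star \<gamma> (subopt (Suc k * N)) s \<le> ?Y / 2 / (1 - \<gamma>)"
    using resolvent_mono[OF optimal_policy, of "subopt (Suc k * N)" "\<lambda>_. ?Y / 2" s]
    by (simp add: resolvent_const optimal_policy)
  moreover have "resolvent P \<pi>star \<gamma> (dist_opt (Suc k * N)) s / \<eta> (k * N) \<le> 2 * ?Y / (1 - \<gamma>)"
    using Suc.IH by (intro epoch_end_bounds(2)) (simp add: mult.assoc)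
  moreover have "epoch_potential (Suc k) s = resolvent P \<pi>star \<gamma> (subopt (Suc k * N)) s
      + resolvent P \<pi>star \<gamma> (dist_opt (Suc k * N)) s / \<eta> (k * N) / 4"
    unfolding epoch_potential_def step_size_next_epoch by (simp add: mult.commute)
  ultimately have "epoch_potential (Suc k) s \<le> ?Y / 2 / (1 - \<gamma>) + 2 * ?Y / (1 - \<gamma>) / 4"
    by (simp only:) (intro add_mono divide_right_mono; simp)
  also have "\<dots> = 2 * (1/2) ^ Suc k * \<Delta> / (1 - \<gamma>)"
    by (simp add: divide_simps)
  finally show ?case .
qed

lemma epoch_start_subopt: "subopt (k * N) s \<le> (1/2) ^ k * \<Delta>"
proof (cases k)
  case 0
  then show ?thesis using initial_subopt by simp
next
  case (Suc j)
  then show ?thesis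
    using epoch_end_subopt[of j s "(1/2) ^ j * \<Delta>"] epoch_potential_bound[of j s]
    by (simp add: mult.assoc)
qed

lemma pmd_linear_rate: "subopt t s \<le> (1/2) ^ (t div N) * \<Delta>"
proof -
  have "subopt t s \<le> subopt (t div N * N) s"
    using lift_Suc_antimono_le[of "\<lambda>t. subopt t s", OF subopt_antimono] by simp
  also have "\<dots> \<le> (1/2) ^ (t div N) * \<Delta>"
    by (rule epoch_start_subopt)
  finally show ?thesis .
qed

end

theorem theorem3p4:
  fixes P :: "'s::finite \<Rightarrow> 'a::finite \<Rightarrow> 's \<Rightarrow> real"
    and c :: "'s \<Rightarrow> 'a \<Rightarrow> real"
    and h :: "'s \<Rightarrow> real^'a \<Rightarrow> real"
    and h' :: "'s \<Rightarrow> real^'a \<Rightarrow> 'a \<Rightarrow> real"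
    and \<gamma> \<mu>h D0 :: real
    and \<omega> :: "real^'a \<Rightarrow> real"
    and g\<omega> :: "real^'a \<Rightarrow> real^'a"
    and \<pi>star \<pi>0 :: "'s \<Rightarrow> real^'a"
    and \<pi>s :: "nat \<Rightarrow> 's \<Rightarrow> real^'a"
  assumes P_nonneg: "\<And>s a s'. 0 \<le> P s a s'"
    and P_sum: "\<And>s a. (\<Sum>s'\<in>UNIV. P s a s') = 1"
    and gamma: "0 \<le> \<gamma>" "\<gamma> < 1"
    and omega_convex: "convex_on prob_simplex \<omega>"
    and omega_diff: "\<And>p. p \<in> prob_simplex \<Longrightarrow>
           (\<omega> has_derivative (\<lambda>v. g\<omega> p \<bullet> v)) (at p within prob_simplex)"
    and h_convex: "\<And>s. convex_on prob_simplex (h s)"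
    and h_closed: "\<And>s. closed {(p, r). p \<in> prob_simplex \<and> h s p \<le> r}"
    and muh: "0 \<le> \<mu>h"
    and h_strong: "\<And>s p p'. p \<in> prob_simplex \<Longrightarrow> p' \<in> prob_simplex \<Longrightarrow>
           h s p - h s p' - (\<Sum>a\<in>UNIV. h' s p' a * (p $ a - p' $ a))
             \<ge> \<mu>h * bregman \<omega> g\<omega> p p'"
    and opt_pol: "is_policy \<pi>star"
    and opt: "\<And>\<pi> s. is_policy \<pi> \<Longrightarrow> Vf P c h \<gamma> \<pi>star s \<le> Vf P c h \<gamma> \<pi> s"
    and init_pol: "is_policy \<pi>0"
    and D0_pos: "0 < D0"
    and D0_bound: "\<And>s. bregman \<omega> g\<omega> (\<pi>star s) (\<pi>0 s) \<le> D0"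
    and Delta0_pos: "0 < Max (range (adv_gap P c h \<gamma> \<pi>0)) / (1 - \<gamma>)"
    and pmd_init: "\<pi>s 0 = \<pi>0"
    and pmd_step: "\<And>t s. \<pi>s (Suc t) s \<in> prob_simplex \<and>
           (\<forall>p\<in>prob_simplex.
              pmd_obj P c h \<gamma> \<omega> g\<omega>
                 (4 ^ (t div nat \<lceil>4 / (1 - \<gamma>)\<rceil>) * D0
                    / (Max (range (adv_gap P c h \<gamma> \<pi>0)) / (1 - \<gamma>)))
                 (\<pi>s t) s (\<pi>s (Suc t) s)
              \<le> pmd_obj P c h \<gamma> \<omega> g\<omega>
                 (4 ^ (t div nat \<lceil>4 / (1 - \<gamma>)\<rceil>) * D0
                    / (Max (range (adv_gap P c h \<gamma> \<pi>0)) / (1 - \<gamma>)))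
                 (\<pi>s t) s p)"
  shows "\<forall>t s. Vf P c h \<gamma> (\<pi>s t) s - Vf P c h \<gamma> \<pi>star s
           \<le> (1 / 2) ^ (t div nat \<lceil>4 / (1 - \<gamma>)\<rceil>)
              * (Max (range (adv_gap P c h \<gamma> \<pi>0)) / (1 - \<gamma>))"
proof -
  define N where "N = nat \<lceil>4 / (1 - \<gamma>)\<rceil>"
  define \<Delta> where "\<Delta> = Max (range (adv_gap P c h \<gamma> \<pi>0)) / (1 - \<gamma>)"
  have \<Delta>_pos: "0 < \<Delta>"
    using Delta0_pos by (simp add: \<Delta>_def)
  interpret discounted_mdp P \<gamma>
    using P_nonneg P_sum gamma by unfold_locales
  have iterates: "is_policy (\<pi>s t)" for t
    using init_pol pmd_init pmd_step by (cases t) (auto simp: is_policy_def)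
  \<comment> \<open>h_closed only ensures that the PMD subproblems have minimisers, which pmd_step provides\<close>
  have h_subgradient: "h x (\<pi>0 x) + (\<Sum>a\<in>UNIV. h' x (\<pi>0 x) a * (q $ a - \<pi>0 x $ a)) \<le> h x q"
    if "q \<in> prob_simplex" for x q
    using that init_pol h_strong muh unfolding is_policy_def
    by (intro subgradient_of_relative_strong_convexity[OF convex_prob_simplex omega_convex omega_diff])
      auto
  define \<eta> where "\<eta> t = 4 ^ (t div N) * D0 / \<Delta>" for t
  interpret pmd P \<gamma> c h \<omega> g\<omega> \<pi>star \<pi>s \<eta>
  proof unfold_locales
    show "0 < \<eta> t" for t
      using D0_pos \<Delta>_pos by (simp add: \<eta>_def)
    show "pmd_obj P c h \<gamma> \<omega> g\<omega> (\<eta> t) (\<pi>s t) s (\<pi>s (Suc t) s)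
        \<le> pmd_obj P c h \<gamma> \<omega> g\<omega> (\<eta> t) (\<pi>s t) s p" if "p \<in> prob_simplex" for t s p
      using pmd_step that unfolding \<eta>_def N_def \<Delta>_def by blast
  qed (use omega_convex omega_diff h_convex opt_pol opt iterates in auto)
  interpret pmd_epoch_schedule P \<gamma> c h \<omega> g\<omega> \<pi>star \<pi>s \<eta> N "D0 / \<Delta>" \<Delta>
  proof unfold_locales
    show "\<eta> t = 4 ^ (t div N) * (D0 / \<Delta>)" for t
      by (simp add: \<eta>_def)
    show "4 / (1 - \<gamma>) \<le> real N"
      unfolding N_def by (rule real_nat_ceiling_ge)
    show "subopt 0 s \<le> \<Delta>" for s
      using value_sub_le_max_adv_gap[OF init_pol opt_pol h_subgradient]
      by (simp add: subopt_def pmd_init \<Delta>_def)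
    show "dist_opt 0 s \<le> D0 / \<Delta> * \<Delta>" for s
      using D0_bound \<Delta>_pos by (simp add: dist_opt_def pmd_init)
  qed
  show ?thesis
    using pmd_linear_rate by (simp add: subopt_def N_def \<Delta>_def)
qed

end
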